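(* Let $R$ be a commutative ring and let $f,g\in R[[x]]$ be formal power series. For an integer $m\ge1$ write $\ell(m)=\lfloor\log_2 m\rfloor$. Then $$f(x)g(x)=\frac{f(x)\odot g(x)}{1-x}-\sum_{m=1}^{\infty}\frac{1-x^{2^{\ell(m)}}}{(1-x)\,x^m}\,U_m(x)\,V_m(x),$$ where $$U_m(x)=\Bigl(\frac{x^m}{1-x^{2^{\ell(m)+1}}}\Bigr)\odot\Bigl(\bigl(1-x^{2^{\ell(m)}}\bigr)f(x)\Bigr),\qquad V_m(x)=\Bigl(\frac{x^m}{1-x^{2^{\ell(m)+1}}}\Bigr)\odot\Bigl(\bigl(1-x^{2^{\ell(m)}}\bigr)g(x)\Bigr).$$
   Context: For formal power series $P=\sum_i p_ix^i$ and $Q=\sum_i q_ix^i$, the termwise product is $P\odot Q=\sum_i p_iq_ix^i$. Fractions such as $\frac{1}{1-x^{N}}=\sum_{i\ge0}x^{iN}$ are understood in $R[[x]]$; the division by $x^m$ is exact since $U_m,V_m$ are divisible by $x^m$, and the infinite sum converges formally (the $m$-th summand has order at least $m$). *)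

theory Defs
  imports "HOL-Computational_Algebra.Formal_Power_Series" "HOL-Library.Discrete_Functions"
begin

definition fps_hadamard :: "'a::times fps \<Rightarrow> 'a fps \<Rightarrow> 'a fps" where
  "fps_hadamard P Q = Abs_fps (\<lambda>i. fps_nth P i * fps_nth Q i)"

text \<open>The series 1/(1 - x^N) = sum over i of x^(i*N), as in the paper's convention.\<close>
definition fps_geom :: "nat \<Rightarrow> 'a::{zero,one} fps" where
  "fps_geom N = Abs_fps (\<lambda>i. if N dvd i then 1 else 0)"

abbreviation ell :: "nat \<Rightarrow> nat" where
  "ell m \<equiv> floor_log m"

definition U_ser :: "nat \<Rightarrow> 'a::comm_ring_1 fps \<Rightarrow> 'a fps" where
  "U_ser m f = fps_hadamard (fps_X ^ m * fps_geom (2 ^ (ell m + 1)))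
                            ((1 - fps_X ^ (2 ^ ell m)) * f)"

text \<open>The m-th summand (1 - x^(2^l(m))) / ((1-x) x^m) * U_m * V_m; the division by x^m is
  exact and realised by fps_shift, and 1/(1-x) is fps_geom 1.\<close>
definition summand :: "'a::comm_ring_1 fps \<Rightarrow> 'a fps \<Rightarrow> nat \<Rightarrow> 'a fps" where
  "summand f g m = (1 - fps_X ^ (2 ^ ell m)) * fps_geom 1 * fps_shift m (U_ser m f * U_ser m g)"

end

theory Submission
  imports Defs
begin

text \<open>
  Write S[M,r] f (fps_multisection M r f) for the part of f on the exponents congruent to r
  mod M, and put
  W[M] = (1 - x^M)/(1 - x) * (sum over r < M of x^(-r) * S[M,r] f * S[M,r] g).
  Then W[1] = f g, and since S[M,r] f = f_r x^r mod x^(r+M), W[M] agrees with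
  (f \<odot> g)/(1 - x) modulo x^M. For L = 2^k and m = L + r < 2L one has
  U_m = S[2L,m] f - x^L S[2L,r] f, and splitting S[L,r] = S[2L,r] + S[2L,r+L] turns the
  summands of level k into W[2L] - W[L]. The levels telescope, and the m-th summand is
  divisible by x^m, so the series converges to (f \<odot> g)/(1 - x) - f g.
\<close>

unbundle fps_syntax

lemma fps_X_power_dvd_iff:
  "fps_X ^ n dvd (f :: 'a::comm_semiring_1 fps) \<longleftrightarrow> (\<forall>k<n. f $ k = 0)"
proof
  assume "fps_X ^ n dvd f"
  then obtain g where "f = fps_X ^ n * g" ..
  then show "\<forall>k<n. f $ k = 0" by (simp add: fps_X_power_mult_nth)
next
  assume "\<forall>k<n. f $ k = 0"
  then have "f = fps_X ^ n * fps_shift n f"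
    by (intro fps_ext) (simp add: fps_X_power_mult_nth)
  then show "fps_X ^ n dvd f" by (rule dvdI)
qed

lemma fps_shift_X_power_mult [simp]: "fps_shift n (fps_X ^ n * f) = f"
  by (intro fps_ext) (simp add: fps_X_power_mult_nth)

lemma fps_X_power_dvd_shift:
  "fps_X ^ (n + k) dvd (f :: 'a::comm_semiring_1 fps) \<Longrightarrow> fps_X ^ k dvd fps_shift n f"
  by (auto simp: fps_X_power_dvd_iff)

lemma fps_geom_nth [simp]: "fps_geom N $ k = (if N dvd k then 1 else 0)"
  by (simp add: fps_geom_def)

lemma fps_geom_1_truncated_nth:
  "((1 - fps_X ^ M) * fps_geom 1 :: 'a::comm_ring_1 fps) $ k = (if k < M then 1 else 0)"
  by (simp add: algebra_simps fps_X_power_mult_right_nth)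

lemma mod_eq_iff_le_dvd: "(r::nat) < M \<Longrightarrow> k mod M = r \<longleftrightarrow> r \<le> k \<and> M dvd k - r"
  by (metis dvd_minus_mod mod_less_eq_dividend mod_nat_eqI)

lemma fps_X_power_mult_geom_nth:
  assumes "m < M"
  shows "(fps_X ^ m * fps_geom M :: 'a::comm_semiring_1 fps) $ k = (if k mod M = m then 1 else 0)"
  using assms by (auto simp: fps_X_power_mult_nth mod_eq_iff_le_dvd)

definition fps_multisection :: "nat \<Rightarrow> nat \<Rightarrow> 'a::zero fps \<Rightarrow> 'a fps" where
  "fps_multisection M r f = Abs_fps (\<lambda>k. if k mod M = r then f $ k else 0)"

lemma fps_multisection_nth [simp]:
  "fps_multisection M r f $ k = (if k mod M = r then f $ k else 0)"
  by (simp add: fps_multisection_def)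

lemma fps_multisection_one [simp]: "fps_multisection (Suc 0) 0 f = f"
  by (intro fps_ext) simp

lemma fps_multisection_diff:
  "fps_multisection M r (f - g :: 'a::group_add fps) = fps_multisection M r f - fps_multisection M r g"
  by (intro fps_ext) simp

lemma fps_hadamard_X_power_mult_geom:
  assumes "m < M"
  shows "fps_hadamard (fps_X ^ m * fps_geom M) f = fps_multisection M m (f :: 'a::comm_semiring_1 fps)"
  by (intro fps_ext) (simp add: fps_hadamard_def fps_X_power_mult_geom_nth[OF assms])

lemma fps_multisection_double:
  assumes "r < L"
  shows "fps_multisection L r f = fps_multisection (2 * L) r f + fps_multisection (2 * L) (r + L) (f :: 'a::monoid_add fps)"
proof (intro fps_ext)
  fix k
  have "k mod (2 * L) = k mod L \<or> k mod (2 * L) = k mod L + L"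
    using mod_mult2_eq[of k L 2] by (auto simp: mult.commute)
  moreover have "k mod L < L" using assms by simp
  moreover have "s = r \<longleftrightarrow> t = r \<or> t = r + L" if "t = s \<or> t = s + L" "s < L" for s t :: nat
    using that assms by auto
  ultimately have "k mod L = r \<longleftrightarrow> k mod (2 * L) = r \<or> k mod (2 * L) = r + L"
    by blast
  then show "fps_multisection L r f $ k = (fps_multisection (2 * L) r f + fps_multisection (2 * L) (r + L) f) $ k"
    using assms by auto
qed

lemma fps_multisection_X_power_mult:
  assumes "r + L < M"
  shows "fps_multisection M (r + L) (fps_X ^ L * f) = fps_X ^ L * fps_multisection M r (f :: 'a::comm_semiring_1 fps)"
proof (intro fps_ext)
  fix k
  have "k mod M = r + L \<longleftrightarrow> (k - L) mod M = r" if "L \<le> k"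
    using that assms by (auto simp: mod_eq_iff_le_dvd add.commute)
  moreover have "k mod M \<noteq> r + L" if "k < L"
    using that mod_less_eq_dividend[of k M] by linarith
  ultimately show "fps_multisection M (r + L) (fps_X ^ L * f) $ k = (fps_X ^ L * fps_multisection M r f) $ k"
    by (auto simp: fps_X_power_mult_nth)
qed

lemma fps_X_power_dvd_multisection: "fps_X ^ r dvd fps_multisection M r (f :: 'a::comm_semiring_1 fps)"
  by (simp add: fps_X_power_dvd_iff) (metis mod_less_eq_dividend not_le)

lemma fps_multisection_congruent:
  fixes f :: "'a::comm_ring_1 fps"
  assumes "r < M"
  shows "fps_X ^ (r + M) dvd fps_multisection M r f - fps_const (f $ r) * fps_X ^ r"
  unfolding fps_X_power_dvd_iff
proof (intro allI impI)
  fix k assume "k < r + M"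
  then have "k mod M = r \<longleftrightarrow> k = r"
    using assms by (auto simp: mod_eq_iff_le_dvd dest: dvd_imp_le)
  then show "(fps_multisection M r f - fps_const (f $ r) * fps_X ^ r) $ k = 0"
    by simp
qed

lemma fps_shift_mult_diff_identity:
  fixes F0 F1 G0 G1 :: "'a::comm_ring_1 fps"
  assumes "fps_X ^ r dvd F0" "fps_X ^ r dvd G0" "fps_X ^ (r + L) dvd F1" "fps_X ^ (r + L) dvd G1"
  shows "fps_shift (r + L) ((F1 - fps_X ^ L * F0) * (G1 - fps_X ^ L * G0)) =
    (1 + fps_X ^ L) * (fps_shift r (F0 * G0) + fps_shift (r + L) (F1 * G1))
      - fps_shift r ((F0 + F1) * (G0 + G1))"
proof -
  obtain A B C D where F0: "F0 = fps_X ^ r * A" and G0: "G0 = fps_X ^ r * C"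
    and F1: "F1 = fps_X ^ (r + L) * B" and G1: "G1 = fps_X ^ (r + L) * D"
    using assms by (elim dvdE)
  have diffs: "(F1 - fps_X ^ L * F0) * (G1 - fps_X ^ L * G0) = fps_X ^ (r + L) * (fps_X ^ (r + L) * ((B - A) * (D - C)))"
    unfolding F0 F1 G0 G1 by (simp add: power_add algebra_simps)
  have lows: "F0 * G0 = fps_X ^ r * (fps_X ^ r * (A * C))"
    unfolding F0 G0 by (simp add: algebra_simps)
  have highs: "F1 * G1 = fps_X ^ (r + L) * (fps_X ^ (r + L) * (B * D))"
    unfolding F1 G1 by (simp add: algebra_simps)
  have sums: "(F0 + F1) * (G0 + G1) = fps_X ^ r * (fps_X ^ r * ((A + fps_X ^ L * B) * (C + fps_X ^ L * D)))"
    unfolding F0 F1 G0 G1 by (simp add: power_add algebra_simps)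
  show ?thesis
    unfolding diffs lows highs sums fps_shift_X_power_mult
    by (simp add: power_add algebra_simps)
qed

lemma U_ser_eq_multisection:
  "U_ser m f = fps_multisection (2 * 2 ^ ell m) m ((1 - fps_X ^ 2 ^ ell m) * f)"
  using fps_hadamard_X_power_mult_geom[OF floor_log_exp2_gt] by (simp add: U_ser_def)

lemma fps_X_power_dvd_summand: "fps_X ^ m dvd summand f g m"
proof -
  have "fps_X ^ (m + m) dvd U_ser m f * U_ser m g"
    unfolding power_add U_ser_eq_multisection by (intro mult_dvd_mono fps_X_power_dvd_multisection)
  then have "fps_X ^ m dvd fps_shift m (U_ser m f * U_ser m g)"
    by (rule fps_X_power_dvd_shift)
  then show ?thesis
    unfolding summand_def by (rule dvd_mult)
qed

text \<open>section_term M r f g is x^(-r) * S[M,r] f * S[M,r] g, and section_product M f g is W[M].\<close>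

definition section_term :: "nat \<Rightarrow> nat \<Rightarrow> 'a::comm_ring_1 fps \<Rightarrow> 'a fps \<Rightarrow> 'a fps" where
  "section_term M r f g = fps_shift r (fps_multisection M r f * fps_multisection M r g)"

definition section_product :: "nat \<Rightarrow> 'a::comm_ring_1 fps \<Rightarrow> 'a fps \<Rightarrow> 'a fps" where
  "section_product M f g = (1 - fps_X ^ M) * fps_geom 1 * (\<Sum>r<M. section_term M r f g)"

lemma section_product_one: "section_product 1 f g = f * g"
proof -
  have "(1 - fps_X ^ 1) * fps_geom 1 = (1 :: 'a fps)"
    by (intro fps_ext) (simp only: fps_geom_1_truncated_nth, simp)
  then show ?thesis by (simp add: section_product_def section_term_def)
qed

lemma section_term_congruent:
  fixes f g :: "'a::comm_ring_1 fps"
  assumes "r < M"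
  shows "fps_X ^ M dvd section_term M r f g - fps_const (f $ r * g $ r) * fps_X ^ r"
proof -
  define a b where "a = fps_multisection M r f" and "b = fps_multisection M r g"
  define a0 b0 where "a0 = fps_const (f $ r) * fps_X ^ r" and "b0 = fps_const (g $ r) * fps_X ^ r"
  have "fps_X ^ (r + M) dvd (a - a0) * b + a0 * (b - b0)"
    unfolding a_def b_def a0_def b0_def
    using fps_multisection_congruent[OF assms] by (intro dvd_add dvd_mult dvd_mult2)
  also have "(a - a0) * b + a0 * (b - b0) = a * b - a0 * b0"
    by (simp add: algebra_simps)
  also have "a0 * b0 = fps_X ^ r * (fps_X ^ r * fps_const (f $ r * g $ r))"
    by (simp add: a0_def b0_def flip: fps_const_mult)
  finally have "fps_X ^ M dvd fps_shift r (a * b) - fps_shift r (fps_X ^ r * (fps_X ^ r * fps_const (f $ r * g $ r)))"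
    unfolding fps_shift_diff[symmetric] by (rule fps_X_power_dvd_shift)
  then show ?thesis
    by (simp add: section_term_def a_def b_def mult.commute)
qed

lemma section_product_congruent:
  "fps_X ^ M dvd section_product M f g - fps_hadamard f g * fps_geom 1"
proof -
  define H where "H = (\<Sum>r<M. section_term M r f g)"
  define T where "T = (\<Sum>r<M. fps_const (f $ r * g $ r) * fps_X ^ r)"
  have "fps_X ^ M dvd H - T"
    unfolding H_def T_def sum_subtractf[symmetric] using section_term_congruent by (intro dvd_sum) auto
  moreover have "fps_X ^ M dvd T - fps_hadamard f g"
    by (auto simp: fps_X_power_dvd_iff T_def fps_sum_nth fps_hadamard_def if_distrib cong: if_cong)
  ultimately have "fps_X ^ M dvd H - fps_hadamard f g"
    using dvd_add by fastforce
  then have "fps_X ^ M dvd fps_geom 1 * (H - fps_hadamard f g) - fps_X ^ M * (fps_geom 1 * H)"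
    by (rule dvd_diff[OF dvd_mult dvd_triv_left])
  also have "\<dots> = section_product M f g - fps_hadamard f g * fps_geom 1"
    by (simp add: section_product_def H_def algebra_simps)
  finally show ?thesis .
qed

lemma summand_eq_section_terms:
  fixes f g :: "'a::comm_ring_1 fps"
  assumes L: "L = 2 ^ k" and r: "r < L"
  shows "summand f g (L + r) = (1 - fps_X ^ L) * fps_geom 1 *
    ((1 + fps_X ^ L) * (section_term (2 * L) r f g + section_term (2 * L) (r + L) f g)
      - section_term L r f g)"
proof -
  have "ell (L + r) = k"
    using L r by (intro floor_log_eqI) auto
  then have U: "U_ser (L + r) h = fps_multisection (2 * L) (r + L) h - fps_X ^ L * fps_multisection (2 * L) r h"
    for h :: "'a fps"
    using r by (simp add: U_ser_eq_multisection L algebra_simps fps_multisection_diff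
        fps_multisection_X_power_mult[symmetric])
  have "fps_shift (r + L) (U_ser (L + r) f * U_ser (L + r) g) =
    (1 + fps_X ^ L) * (section_term (2 * L) r f g + section_term (2 * L) (r + L) f g)
      - section_term L r f g"
    unfolding U section_term_def fps_multisection_double[OF r]
    by (intro fps_shift_mult_diff_identity fps_X_power_dvd_multisection)
  with \<open>ell (L + r) = k\<close> show ?thesis
    by (simp add: summand_def L add.commute)
qed

lemma sum_lessThan_double:
  fixes h :: "nat \<Rightarrow> 'b::comm_monoid_add"
  shows "(\<Sum>i<2 * n. h i) = (\<Sum>i<n. h i) + (\<Sum>i<n. h (n + i))"
  using sum.atLeastLessThan_concat[of 0 n "2 * n" h] sum.atLeastLessThan_shift_0[of h n "2 * n"]
  by (simp add: atLeast0LessThan comp_def)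

lemma sum_summand_level:
  fixes f g :: "'a::comm_ring_1 fps"
  shows "(\<Sum>m\<in>{2 ^ k..<2 * 2 ^ k}. summand f g m) = section_product (2 * 2 ^ k) f g - section_product (2 ^ k) f g"
proof -
  define L where "L = (2::nat) ^ k"
  define C where "C = (1 - fps_X ^ L) * (fps_geom 1 :: 'a fps)"
  define T where "T = (\<Sum>r<L. section_term (2 * L) r f g) + (\<Sum>r<L. section_term (2 * L) (L + r) f g)"
  have "(\<Sum>m\<in>{L..<2 * L}. summand f g m) = (\<Sum>r<L. summand f g (L + r))"
    using sum.atLeastLessThan_shift_0[of "summand f g" L "2 * L"] by (simp add: atLeast0LessThan comp_def)
  also have "\<dots> = (\<Sum>r<L. C * ((1 + fps_X ^ L) *
      (section_term (2 * L) r f g + section_term (2 * L) (L + r) f g) - section_term L r f g))"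
    using summand_eq_section_terms[OF L_def] by (intro sum.cong) (simp_all add: C_def add.commute)
  also have "\<dots> = C * ((1 + fps_X ^ L) * T - (\<Sum>r<L. section_term L r f g))"
    by (simp add: T_def sum_distrib_left sum_subtractf sum.distrib right_diff_distrib distrib_left)
  also have "\<dots> = section_product (2 * L) f g - section_product L f g"
  proof -
    have "(1 - fps_X ^ (2 * L) :: 'a fps) = (1 - fps_X ^ L) * (1 + fps_X ^ L)"
      unfolding mult_2 power_add by (simp add: algebra_simps)
    then have "section_product (2 * L) f g = C * (1 + fps_X ^ L) * T"
      unfolding section_product_def sum_lessThan_double T_def[symmetric] C_def by (simp only: ac_simps)
    moreover have "section_product L f g = C * (\<Sum>r<L. section_term L r f g)"
      by (simp add: section_product_def C_def)
    ultimately show ?thesis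
      by (simp add: right_diff_distrib mult.assoc)
  qed
  finally show ?thesis unfolding L_def .
qed

lemma sum_summand_telescope:
  "(\<Sum>m\<in>{1..<2 ^ K}. summand f g m) = section_product (2 ^ K) f g - f * g"
proof (induction K)
  case 0
  show ?case using section_product_one[of f g] by simp
next
  case (Suc K)
  have "(\<Sum>m\<in>{1..<2 ^ Suc K}. summand f g m) =
      (\<Sum>m\<in>{1..<2 ^ K}. summand f g m) + (\<Sum>m\<in>{2 ^ K..<2 * 2 ^ K}. summand f g m)"
    by (simp add: sum.atLeastLessThan_concat)
  also have "\<dots> = section_product (2 ^ Suc K) f g - f * g"
    unfolding Suc.IH sum_summand_level by simp
  finally show ?case .
qed

lemma partial_sum_summand_congruent:
  assumes "2 ^ K \<le> N"
  shows "fps_X ^ 2 ^ K dvd (\<Sum>i<N. summand f g (Suc i)) - (fps_hadamard f g * fps_geom 1 - f * g)"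
proof -
  have "(\<Sum>i<N. summand f g (Suc i)) = (\<Sum>m\<in>{1..<Suc N}. summand f g m)"
    using sum.shift_bounds_Suc_ivl[of "summand f g" 0 N] by (simp add: atLeast0LessThan)
  also have "\<dots> = (\<Sum>m\<in>{1..<2 ^ K}. summand f g m) + (\<Sum>m\<in>{2 ^ K..<Suc N}. summand f g m)"
    using assms by (intro sum.atLeastLessThan_concat[symmetric]) auto
  also have "\<dots> = section_product (2 ^ K) f g - f * g + (\<Sum>m\<in>{2 ^ K..<Suc N}. summand f g m)"
    by (simp only: sum_summand_telescope)
  finally have partial_sum: "(\<Sum>i<N. summand f g (Suc i)) - (fps_hadamard f g * fps_geom 1 - f * g) =
      (section_product (2 ^ K) f g - fps_hadamard f g * fps_geom 1) + (\<Sum>m\<in>{2 ^ K..<Suc N}. summand f g m)"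
    by simp
  have "fps_X ^ 2 ^ K dvd (\<Sum>m\<in>{2 ^ K..<Suc N}. summand f g m)"
    by (intro dvd_sum) (auto intro: power_le_dvd[OF fps_X_power_dvd_summand])
  then show ?thesis
    unfolding partial_sum by (rule dvd_add[OF section_product_congruent])
qed

lemma summand_sums:
  "(\<lambda>n. summand f g (Suc n)) sums (fps_hadamard f g * fps_geom 1 - f * g)"
  unfolding sums_def
proof (rule tendsto_fpsI)
  fix n
  have "(\<Sum>i<N. summand f g (Suc i)) $ n = (fps_hadamard f g * fps_geom 1 - f * g) $ n"
    if "2 ^ n \<le> N" for N
    using partial_sum_summand_congruent[OF that, of f g] less_exp[of n]
    by (auto simp: fps_X_power_dvd_iff)
  then show "eventually (\<lambda>N. (\<Sum>i<N. summand f g (Suc i)) $ n = (fps_hadamard f g * fps_geom 1 - f * g) $ n) sequentially"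
    unfolding eventually_sequentially by blast
qed

theorem mainTheorem3:
  fixes f g :: "'a::comm_ring_1 fps"
  shows "(\<lambda>n. summand f g (Suc n)) sums (fps_hadamard f g * fps_geom 1 - f * g)
         \<and> f * g = fps_hadamard f g * fps_geom 1 - (\<Sum>n. summand f g (Suc n))"
proof
  show "(\<lambda>n. summand f g (Suc n)) sums (fps_hadamard f g * fps_geom 1 - f * g)"
    by (rule summand_sums)
  then have "(\<Sum>n. summand f g (Suc n)) = fps_hadamard f g * fps_geom 1 - f * g"
    by (rule sums_unique[symmetric])
  then show "f * g = fps_hadamard f g * fps_geom 1 - (\<Sum>n. summand f g (Suc n))"
    by simp
qed

end
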